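(* Let $\Gamma$ be a totally ordered set, $\sigma:\Gamma\to\Gamma$ an order-preserving embedding with $\sigma(\gamma)<\gamma$ for all $\gamma\in\Gamma$, and $(\mathbf k,\log)$ an ordered field with surjective logarithm. Let $G=\Gamma^{\mathbf k}$ with prelogarithmic section $l_\sigma$, and consider the EL-series field $\mathbf k((\Gamma^{\mathbf k}))^{\sigma EL}$ with logarithm $\mathrm{Log}_\sigma$. Then for every $n\ge0$ and every $g\in G^{\#n}$ with $g>1$ we have $v(\mathrm{Log}_\sigma(g))<g$, where $v$ is the canonical valuation on $\mathbf k((G^{\#(n+1)}))$.
   Context: Let $\mathbf k$ be an ordered field and $(G,\cdot,<)$ a totally ordered abelian group. $\mathbf k((G))$ denotes the field of generalized power series $\alpha=\sum_{g\in G}\alpha(g)\,g$ with anti-well-ordered support, usual operations, canonical valuation $v(\alpha)=\max\operatorname{supp}\alpha$ and ordering $\alpha>0$ iff $\alpha(v(\alpha))>0$. $\mathbf k((S))=\{\alpha:\operatorname{supp}\alpha\subseteq S\}$, $G^{>1}=\{g>1\}$. Hahn group: $\Gamma^{\mathbf k}$ is the set of formal products $g=\prod_{\gamma\in\Gamma}x_\gamma^{g(\gamma)}$, $g(\gamma)\in\mathbf k$, with anti-well-ordered support $\{\gamma:g(\gamma)\ne0\}\subseteq\Gamma$, multiplied pointwise, ordered by $g>1$ iff $g(\gamma)>0$ for $\gamma=\max\operatorname{supp}g$. The prelogarithmic section $l_\sigma:\Gamma^{\mathbf k}\to\mathbf k((G^{>1}))$ is $l_\sigma(\prod x_\gamma^{g(\gamma)})=\sum_\gamma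 g(\gamma)\,x_{\sigma(\gamma)}$ (here $x_{\sigma(\gamma)}\in\Gamma^{\mathbf k}$ is a monomial). A prelogarithmic section is an order-preserving group embedding $l:(G,\cdot)\to(\mathbf k((G^{>1})),+)$. Exponential extension: $G^\#$ is the ordered abelian group of formal symbols $e(\alpha)$, $\alpha\in\mathbf k((G^{>1}))$, with $e(\alpha)e(\beta)=e(\alpha+\beta)$, $e(\alpha)<e(\beta)\iff\alpha<\beta$, and $e(l(g))$ identified with $g\in G$; $l^\#(e(\alpha))=\alpha$ is a prelogarithmic section extending $l$. Iterating gives $G^{\#n}$, $l^{\#n}$; the EL-series field $\mathbf k((G))^{EL}=\bigcup_n\mathbf k((G^{\#n}))$ has logarithm $\mathrm{Log}$ given on $G^{\#n}$ by $l^{\#n}$ (and in general by $\mathrm{Log}(g\,a(1+\varepsilon))=l^{\#n}(g)+\log a+\sum_{i\ge1}(-1)^{i-1}\varepsilon^i/i$). For $(G,l)=(\Gamma^{\mathbf k},l_\sigma)$ this field is denoted $\mathbf k((\Gamma^{\mathbf k}))^{\sigma EL}$ and its logarithm $\mathrm{Log}_\sigma$. *)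

theory Defs
  imports Main
begin

text \<open>Generalized power series are represented as functions (monomial -> coefficient).
  Multiplicative monomial groups that are not Hahn groups live inside an ambient totally
  ordered type 'h with an explicit group operation.\<close>

definition supp :: "('a \<Rightarrow> 'b::zero) \<Rightarrow> 'a set" where
  "supp s = {m. s m \<noteq> 0}"

definition anti_wo :: "'a::linorder set \<Rightarrow> bool" where
  "anti_wo S \<longleftrightarrow> (\<forall>A \<subseteq> S. A \<noteq> {} \<longrightarrow> (\<exists>m\<in>A. \<forall>a\<in>A. a \<le> m))"

definition series_on :: "'a::linorder set \<Rightarrow> ('a \<Rightarrow> 'k::zero) set" where
  "series_on S = {s. anti_wo (supp s) \<and> supp s \<subseteq> S}"

definition val :: "('a::linorder \<Rightarrow> 'k::zero) \<Rightarrow> 'a" where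
  "val s = (GREATEST m. s m \<noteq> 0)"

definition ser_pos :: "('a::linorder \<Rightarrow> 'k::linordered_field) \<Rightarrow> bool" where
  "ser_pos s \<longleftrightarrow> supp s \<noteq> {} \<and> s (val s) > 0"

definition ser_less :: "('a::linorder \<Rightarrow> 'k::linordered_field) \<Rightarrow> ('a \<Rightarrow> 'k) \<Rightarrow> bool" where
  "ser_less s t \<longleftrightarrow> ser_pos (\<lambda>m. t m - s m)"

text \<open>Hahn group Gamma^k: exponent vectors g (product of x_gamma^(g gamma)) with anti-well-ordered
  support, group operation pointwise addition of exponents, ordering g > 1 iff leading exponent > 0
  (i.e. ser_less).\<close>
definition hahn_grp :: "('g::linorder \<Rightarrow> 'k::linordered_field) set" where
  "hahn_grp = series_on UNIV"

definition xmon :: "'g \<Rightarrow> ('g \<Rightarrow> 'k::linordered_field)" where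
  "xmon \<delta> = (\<lambda>\<gamma>. if \<gamma> = \<delta> then 1 else 0)"

text \<open>l_sigma(prod x_gamma^(g gamma)) = sum g(gamma) x_(sigma gamma), a series over Gamma^k.\<close>
definition l_sigma :: "('g \<Rightarrow> 'g) \<Rightarrow> ('g::linorder \<Rightarrow> 'k::linordered_field) \<Rightarrow> (('g \<Rightarrow> 'k) \<Rightarrow> 'k)" where
  "l_sigma \<sigma> g = (\<lambda>m. if \<exists>\<gamma>. m = xmon (\<sigma> \<gamma>) then g (THE \<gamma>. m = xmon (\<sigma> \<gamma>)) else 0)"

definition is_log :: "('k::linordered_field \<Rightarrow> 'k) \<Rightarrow> bool" where
  "is_log lg \<longleftrightarrow> (\<forall>x>0. \<forall>y>0. lg (x * y) = lg x + lg y) \<and> (\<forall>x>0. \<forall>y>0. x < y \<longrightarrow> lg x < lg y)"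

definition surj_log :: "('k::linordered_field \<Rightarrow> 'k) \<Rightarrow> bool" where
  "surj_log lg \<longleftrightarrow> (\<forall>y. \<exists>x>0. lg x = y)"

text \<open>(H', l') is the exponential extension (G^#, l^#) of (H, l), both realized inside the ambient
  totally ordered type 'h with monomial multiplication mul and unit one:
  H is a subset of H', H' is closed under mul, l' is an order-preserving group embedding of H'
  into the additive group of series, l' extends l, and the image of l' is exactly k((H^{>1})).
  This determines (H',l') uniquely up to isomorphism over H (e(alpha) corresponds to the
  unique element with l'-image alpha).\<close>
definition exp_ext ::
  "('h::linorder \<Rightarrow> 'h \<Rightarrow> 'h) \<Rightarrow> 'h \<Rightarrow> 'h set \<Rightarrow> ('h \<Rightarrow> 'h \<Rightarrow> 'k::linordered_field)
     \<Rightarrow> 'h set \<Rightarrow> ('h \<Rightarrow> 'h \<Rightarrow> 'k) \<Rightarrow> bool" where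
  "exp_ext mul one H l H' l' \<longleftrightarrow>
     H \<subseteq> H' \<and>
     (\<forall>a\<in>H'. \<forall>b\<in>H'. mul a b \<in> H') \<and>
     (\<forall>a\<in>H'. \<forall>b\<in>H'. l' (mul a b) = (\<lambda>m. l' a m + l' b m)) \<and>
     (\<forall>a\<in>H'. \<forall>b\<in>H'. a < b \<longrightarrow> ser_less (l' a) (l' b)) \<and>
     (\<forall>a\<in>H. l' a = l a) \<and>
     l' ` H' = series_on {h\<in>H. one < h}"

text \<open>(HS n, ls n) for n <= N is (an isomorphic copy, inside 'h, of) the tower
  (G^{#n}, l^{#n}) built from (Gamma^k, l_sigma): phi is an order-preserving group isomorphism
  of Gamma^k onto HS 0 transporting l_sigma to ls 0, and each level is the exponential
  extension of the previous one.\<close>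
definition EL_tower ::
  "('g::linorder \<Rightarrow> 'g) \<Rightarrow> (('g \<Rightarrow> 'k::linordered_field) \<Rightarrow> 'h::linorder) \<Rightarrow> ('h \<Rightarrow> 'h \<Rightarrow> 'h)
     \<Rightarrow> (nat \<Rightarrow> 'h set) \<Rightarrow> (nat \<Rightarrow> 'h \<Rightarrow> 'h \<Rightarrow> 'k) \<Rightarrow> nat \<Rightarrow> bool" where
  "EL_tower \<sigma> \<phi> mul HS ls N \<longleftrightarrow>
     \<phi> ` hahn_grp = HS 0 \<and>
     (\<forall>f\<in>hahn_grp. \<forall>g\<in>hahn_grp. \<phi> (\<lambda>\<gamma>. f \<gamma> + g \<gamma>) = mul (\<phi> f) (\<phi> g)) \<and>
     (\<forall>f\<in>hahn_grp. \<forall>g\<in>hahn_grp. ser_less f g \<longrightarrow> \<phi> f < \<phi> g) \<and>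
     (\<forall>f\<in>hahn_grp. ls 0 (\<phi> f) =
        (\<lambda>h. if h \<in> HS 0 then l_sigma \<sigma> f (the_inv_into hahn_grp \<phi> h) else 0)) \<and>
     (\<forall>n<N. exp_ext mul (\<phi> (\<lambda>_. 0)) (HS n) (ls n) (HS (Suc n)) (ls (Suc n)))"

end

theory Submission
  imports Defs
begin

(* Call a level (H, l) of the exponential tower log-dominated if for every
   monomial g > 1 of H the series l(g) has a leading monomial and all monomials of l(g) lie
   strictly below g; then v(l(g)) < g.  We prove that every level of the tower is
   log-dominated, by induction on the level.
   - Level 0: for f > 1 in the Hahn group with leading exponent gamma0, the monomials of
     l_sigma(f) are the x_(sigma gamma) with f(gamma) nonzero, and x_(sigma gamma) < f because
     sigma gamma <= sigma gamma0 < gamma0; the leading one is x_(sigma gamma0).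
   - Step: if g > 1 lies in the exponential extension, l'(g) is a positive series supported
     on H^(>1) with leading monomial h.  By hypothesis l(h) only has monomials below h, so the
     leading term of l'(g) - l'(h) sits at h and is positive; hence l'(h) < l'(g), and since
     l' is an order embedding, h < g.  The
   logarithm on the coefficient field plays no role in this inequality: it only enters the
   logarithm of series through coefficients and infinitesimal parts, never through the
   monomials g of the tower. *)

definition has_leading :: "('a::linorder \<Rightarrow> 'k::zero) \<Rightarrow> bool" where
  "has_leading s \<longleftrightarrow> (\<exists>M. s M \<noteq> 0 \<and> (\<forall>m. s m \<noteq> 0 \<longrightarrow> m \<le> M))"

lemma val_eq:
  assumes "s M \<noteq> 0" "\<forall>m. s m \<noteq> 0 \<longrightarrow> m \<le> M"
  shows "val s = M"
  unfolding val_def by (rule Greatest_equality) (use assms in auto)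

lemma val_less_bound:
  assumes "has_leading s" "\<forall>m. s m \<noteq> 0 \<longrightarrow> m < g"
  shows "val s < g"
  using assms val_eq unfolding has_leading_def by metis

lemma anti_wo_maximum:
  assumes "anti_wo B" "C \<subseteq> B" "C \<noteq> {}"
  shows "\<exists>m\<in>C. \<forall>a\<in>C. a \<le> m"
  using assms unfolding anti_wo_def by blast

lemma leading_val:
  assumes "anti_wo (supp s)" "supp s \<noteq> {}"
  shows "s (val s) \<noteq> 0" "\<forall>m. s m \<noteq> 0 \<longrightarrow> m \<le> val s"
proof -
  obtain M where M: "s M \<noteq> 0" "\<forall>m. s m \<noteq> 0 \<longrightarrow> m \<le> M"
    using anti_wo_maximum[OF assms(1) order_refl assms(2)] unfolding supp_def by blast
  with val_eq show "s (val s) \<noteq> 0" "\<forall>m. s m \<noteq> 0 \<longrightarrow> m \<le> val s" by metis+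
qed

lemma ser_posI:
  fixes s :: "'a::linorder \<Rightarrow> 'k::linordered_field"
  assumes "s M > 0" "\<forall>m. s m \<noteq> 0 \<longrightarrow> m \<le> M"
  shows "ser_pos s"
proof -
  have "s M \<noteq> 0" using assms(1) by simp
  then have "val s = M" using assms(2) by (rule val_eq)
  then show ?thesis using assms(1) \<open>s M \<noteq> 0\<close> unfolding ser_pos_def supp_def by blast
qed

lemma ser_less_irrefl:
  fixes s :: "'a::linorder \<Rightarrow> 'k::linordered_field"
  shows "\<not> ser_less s s"
  unfolding ser_less_def ser_pos_def supp_def by auto

lemma ser_less_asym:
  fixes s t :: "'a::linorder \<Rightarrow> 'k::linordered_field"
  assumes "ser_less s t" shows "\<not> ser_less t s"
proof
  assume "ser_less t s"
  have "(\<lambda>m. s m - t m \<noteq> 0) = (\<lambda>m. t m - s m \<noteq> 0)" by (auto simp: fun_eq_iff)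
  then have "val (\<lambda>m. s m - t m) = val (\<lambda>m. t m - s m)" unfolding val_def by simp
  with assms \<open>ser_less t s\<close> show False unfolding ser_less_def ser_pos_def by auto
qed

lemma anti_wo_subset:
  assumes "A \<subseteq> B" "anti_wo B" shows "anti_wo A"
  using assms unfolding anti_wo_def by (meson order_trans)

lemma anti_wo_Un:
  assumes A: "anti_wo A" and B: "anti_wo B" shows "anti_wo (A \<union> B)"
  unfolding anti_wo_def
proof (intro allI impI)
  fix C assume C: "C \<subseteq> A \<union> B" "C \<noteq> {}"
  consider "C \<subseteq> B" | "C \<subseteq> A" | "C \<inter> A \<noteq> {}" "C \<inter> B \<noteq> {}" using C(1) by blast
  then show "\<exists>m\<in>C. \<forall>a\<in>C. a \<le> m"
  proof cases
    case 1 then show ?thesis using anti_wo_maximum[OF B _ C(2)] by blast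
  next
    case 2 then show ?thesis using anti_wo_maximum[OF A _ C(2)] by blast
  next
    case 3
    obtain a where a: "a \<in> C \<inter> A" "\<forall>x\<in>C \<inter> A. x \<le> a"
      using anti_wo_maximum[OF A _ 3(1)] by blast
    obtain b where b: "b \<in> C \<inter> B" "\<forall>x\<in>C \<inter> B. x \<le> b"
      using anti_wo_maximum[OF B _ 3(2)] by blast
    have "x \<le> max a b" if "x \<in> C" for x
    proof -
      have "x \<in> C \<inter> A \<or> x \<in> C \<inter> B" using that C(1) by blast
      then show ?thesis using a(2) b(2) by (auto intro: max.coboundedI1 max.coboundedI2)
    qed
    moreover have "max a b \<in> C" using a b by (simp add: max_def)
    ultimately show ?thesis by blast
  qed
qed

lemma ser_total:
  fixes f g :: "'a::linorder \<Rightarrow> 'k::linordered_field"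
  assumes "f \<in> series_on S" "g \<in> series_on S" "f \<noteq> g"
  shows "ser_less f g \<or> ser_less g f"
proof -
  define d where "d = (\<lambda>m. g m - f m)"
  have "supp d \<subseteq> supp f \<union> supp g" unfolding d_def supp_def by auto
  moreover have "anti_wo (supp f \<union> supp g)"
    using assms(1,2) anti_wo_Un unfolding series_on_def by blast
  ultimately have aw: "anti_wo (supp d)" by (rule anti_wo_subset)
  obtain x where "f x \<noteq> g x" using assms(3) by blast
  then have "d x \<noteq> 0" unfolding d_def by simp
  then have "supp d \<noteq> {}" unfolding supp_def by blast
  note lead = leading_val[OF aw this]
  show ?thesis
  proof (cases "d (val d) > 0")
    case True
    then have "ser_pos d" using lead(2) by (rule ser_posI)
    then show ?thesis unfolding ser_less_def d_def by simp
  next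
    case False
    then have "(\<lambda>m. f m - g m) (val d) > 0" using lead(1) unfolding d_def by auto
    moreover have "\<forall>m. (\<lambda>m. f m - g m) m \<noteq> 0 \<longrightarrow> m \<le> val d" using lead(2) unfolding d_def by auto
    ultimately have "ser_pos (\<lambda>m. f m - g m)" by (rule ser_posI)
    then show ?thesis unfolding ser_less_def by simp
  qed
qed

text \<open>A strictly monotone map out of a set of series reflects the order, since the order
  on series is total.\<close>
lemma ser_mono_reflect:
  fixes \<phi> :: "('a::linorder \<Rightarrow> 'k::linordered_field) \<Rightarrow> 'h::linorder"
  assumes mono: "\<forall>f\<in>series_on S. \<forall>g\<in>series_on S. ser_less f g \<longrightarrow> \<phi> f < \<phi> g"
    and "f \<in> series_on S" "g \<in> series_on S" "\<phi> f < \<phi> g"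
  shows "ser_less f g"
  using assms ser_total[of f S g] by (metis less_asym)

lemma ser_mono_inj:
  fixes \<phi> :: "('a::linorder \<Rightarrow> 'k::linordered_field) \<Rightarrow> 'h::linorder"
  assumes "\<forall>f\<in>series_on S. \<forall>g\<in>series_on S. ser_less f g \<longrightarrow> \<phi> f < \<phi> g"
  shows "inj_on \<phi> (series_on S)"
  by (rule inj_onI) (use assms ser_total in \<open>metis less_irrefl\<close>)

lemma zero_in_hahn_grp: "(\<lambda>_. 0) \<in> (hahn_grp :: ('g::linorder \<Rightarrow> 'k::linordered_field) set)"
  unfolding hahn_grp_def series_on_def supp_def anti_wo_def by auto

lemma xmon_in_hahn_grp: "xmon a \<in> (hahn_grp :: ('g::linorder \<Rightarrow> 'k::linordered_field) set)"
proof -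
  have "supp (xmon a :: 'g \<Rightarrow> 'k) = {a}" unfolding supp_def xmon_def by auto
  moreover have "anti_wo {a}" unfolding anti_wo_def by auto
  ultimately show ?thesis unfolding hahn_grp_def series_on_def by simp
qed

lemma xmon_inj:
  assumes "xmon a = (xmon b :: 'g \<Rightarrow> 'k::linordered_field)" shows "a = b"
  using fun_cong[OF assms, of a] by (simp add: xmon_def split: if_splits)

lemma xmon_less:
  assumes "a < b"
  shows "ser_less (xmon a :: 'g::linorder \<Rightarrow> 'k::linordered_field) (xmon b)"
  unfolding ser_less_def by (rule ser_posI[where M=b]) (use assms in \<open>auto simp: xmon_def\<close>)

lemma l_sigma_at_xmon:
  fixes f :: "'g::linorder \<Rightarrow> 'k::linordered_field"
  assumes "inj \<sigma>"
  shows "l_sigma \<sigma> f (xmon (\<sigma> \<gamma>)) = f \<gamma>"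
proof -
  have "(THE \<gamma>'. xmon (\<sigma> \<gamma>) = (xmon (\<sigma> \<gamma>') :: 'g \<Rightarrow> 'k)) = \<gamma>"
  proof (rule the_equality)
    fix \<gamma>' assume "xmon (\<sigma> \<gamma>) = (xmon (\<sigma> \<gamma>') :: 'g \<Rightarrow> 'k)"
    then show "\<gamma>' = \<gamma>" using assms xmon_inj injD by metis
  qed simp
  moreover have "\<exists>\<gamma>'. xmon (\<sigma> \<gamma>) = (xmon (\<sigma> \<gamma>') :: 'g \<Rightarrow> 'k)" by blast
  ultimately show ?thesis unfolding l_sigma_def by (simp only: if_True)
qed

lemma l_sigma_nonzero:
  fixes f :: "'g::linorder \<Rightarrow> 'k::linordered_field"
  assumes "inj \<sigma>" "l_sigma \<sigma> f m \<noteq> 0"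
  shows "\<exists>\<gamma>. f \<gamma> \<noteq> 0 \<and> m = xmon (\<sigma> \<gamma>)"
proof -
  obtain \<gamma> where "m = xmon (\<sigma> \<gamma>)" using assms(2) unfolding l_sigma_def by (auto split: if_splits)
  with assms l_sigma_at_xmon show ?thesis by metis
qed

lemma l_sigma_zero: "l_sigma \<sigma> (\<lambda>_. 0) m = (0::'k::linordered_field)"
  unfolding l_sigma_def by simp

text \<open>The key inequality at level 0: if f > 1 and f(gamma) is nonzero, then
  x_(sigma gamma) < f, because sigma gamma <= sigma v(f) < v(f).\<close>
lemma xmon_sigma_less:
  fixes f :: "'g::linorder \<Rightarrow> 'k::linordered_field"
  assumes "strict_mono \<sigma>" "\<forall>\<gamma>. \<sigma> \<gamma> < \<gamma>"
    and f: "f \<in> hahn_grp" "ser_pos f" and "f \<gamma> \<noteq> 0"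
  shows "ser_less (xmon (\<sigma> \<gamma>)) f"
proof -
  have "supp f \<noteq> {}" "anti_wo (supp f)"
    using f unfolding ser_pos_def hahn_grp_def series_on_def by auto
  note lead = leading_val[OF this(2,1)]
  have "\<sigma> \<gamma> \<le> \<sigma> (val f)" using lead(2) assms(1,5) strict_mono_less_eq by blast
  also have "\<sigma> (val f) < val f" using assms(2) by blast
  finally have below: "\<sigma> \<gamma> < val f" .
  have "(\<lambda>m. f m - xmon (\<sigma> \<gamma>) m) (val f) > 0"
    using f(2) below unfolding ser_pos_def xmon_def by auto
  moreover have "\<forall>m. (\<lambda>m. f m - xmon (\<sigma> \<gamma>) m) m \<noteq> 0 \<longrightarrow> m \<le> val f"
    using lead(2) below unfolding xmon_def by (auto split: if_splits)
  ultimately show ?thesis unfolding ser_less_def by (rule ser_posI)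
qed

definition log_dominated :: "'h::linorder \<Rightarrow> 'h set \<Rightarrow> ('h \<Rightarrow> 'h \<Rightarrow> 'k::zero) \<Rightarrow> bool" where
  "log_dominated one H l \<longleftrightarrow>
     (\<forall>g\<in>H. one < g \<longrightarrow> has_leading (l g) \<and> (\<forall>m. l g m \<noteq> 0 \<longrightarrow> m < g))"

lemma EL_tower_D:
  assumes "EL_tower \<sigma> \<phi> mul HS ls N"
  shows EL_tower_image: "\<phi> ` hahn_grp = HS 0"
    and EL_tower_mono: "\<forall>f\<in>hahn_grp. \<forall>g\<in>hahn_grp. ser_less f g \<longrightarrow> \<phi> f < \<phi> g"
    and EL_tower_log0: "f \<in> hahn_grp \<Longrightarrow>
          ls 0 (\<phi> f) = (\<lambda>h. if h \<in> HS 0 then l_sigma \<sigma> f (the_inv_into hahn_grp \<phi> h) else 0)"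
    and EL_tower_ext: "k < N \<Longrightarrow> exp_ext mul (\<phi> (\<lambda>_. 0)) (HS k) (ls k) (HS (Suc k)) (ls (Suc k))"
  using assms unfolding EL_tower_def by simp_all

lemma tower_base_monomials:
  assumes T: "EL_tower \<sigma> \<phi> mul HS ls N" and "inj \<sigma>" and f: "f \<in> hahn_grp"
  shows "ls 0 (\<phi> f) (\<phi> (xmon (\<sigma> \<gamma>))) = f \<gamma>"
    and "ls 0 (\<phi> f) h \<noteq> 0 \<Longrightarrow> \<exists>\<gamma>. f \<gamma> \<noteq> 0 \<and> h = \<phi> (xmon (\<sigma> \<gamma>))"
proof -
  have inj: "inj_on \<phi> hahn_grp"
    using ser_mono_inj EL_tower_mono[OF T] unfolding hahn_grp_def by blast
  note img = EL_tower_image[OF T]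
  note ls0 = EL_tower_log0[OF T f]
  show "ls 0 (\<phi> f) (\<phi> (xmon (\<sigma> \<gamma>))) = f \<gamma>"
    using ls0 img xmon_in_hahn_grp the_inv_into_f_f[OF inj] l_sigma_at_xmon[OF assms(2)] by auto
  assume nz: "ls 0 (\<phi> f) h \<noteq> 0"
  then have "h \<in> HS 0" using ls0 by (auto split: if_splits)
  then obtain m where m: "m \<in> hahn_grp" "h = \<phi> m" using img by blast
  then have "l_sigma \<sigma> f m \<noteq> 0" using nz ls0 \<open>h \<in> HS 0\<close> the_inv_into_f_f[OF inj m(1)] by simp
  then show "\<exists>\<gamma>. f \<gamma> \<noteq> 0 \<and> h = \<phi> (xmon (\<sigma> \<gamma>))" using l_sigma_nonzero[OF assms(2)] m by blast
qed

text \<open>Level 0 of the tower is log-dominated, with leading monomial phi(x_(sigma v(f))).\<close>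
lemma tower_base_dominated:
  assumes T: "EL_tower \<sigma> \<phi> mul HS ls N" and \<sigma>: "strict_mono \<sigma>" "\<forall>\<gamma>. \<sigma> \<gamma> < \<gamma>"
  shows "log_dominated (\<phi> (\<lambda>_. 0)) (HS 0) (ls 0)"
  unfolding log_dominated_def
proof (intro ballI impI conjI)
  note img = EL_tower_image[OF T] and mono = EL_tower_mono[OF T]
  fix g assume g: "g \<in> HS 0" "\<phi> (\<lambda>_. 0) < g"
  then have "g \<in> \<phi> ` hahn_grp" using img by simp
  then obtain f where f: "f \<in> hahn_grp" "g = \<phi> f" by (rule imageE) simp
  have "ser_less (\<lambda>_. 0) f"
    using ser_mono_reflect[OF mono[unfolded hahn_grp_def]] zero_in_hahn_grp f g(2)
    unfolding hahn_grp_def by simp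
  then have fpos: "ser_pos f" unfolding ser_less_def by simp
  have "supp f \<noteq> {}" "anti_wo (supp f)"
    using fpos f(1) unfolding ser_pos_def hahn_grp_def series_on_def by auto
  note lead = leading_val[OF this(2,1)]
  have inj: "inj \<sigma>" using \<sigma>(1) strict_mono_imp_inj_on by blast
  note mons = tower_base_monomials[OF T inj f(1)]
  have "m < g" if nz: "ls 0 g m \<noteq> 0" for m
  proof -
    obtain \<gamma> where \<gamma>: "f \<gamma> \<noteq> 0" "m = \<phi> (xmon (\<sigma> \<gamma>))" using mons(2) nz f(2) by blast
    have "ser_less (xmon (\<sigma> \<gamma>)) f" using \<gamma>(1) by (rule xmon_sigma_less[OF \<sigma> f(1) fpos])
    then show "m < g" using mono f xmon_in_hahn_grp \<gamma>(2) by blast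
  qed
  then show "\<forall>m. ls 0 g m \<noteq> 0 \<longrightarrow> m < g" by blast
  have "m \<le> \<phi> (xmon (\<sigma> (val f)))" if nz: "ls 0 g m \<noteq> 0" for m
  proof -
    obtain \<gamma> where \<gamma>: "f \<gamma> \<noteq> 0" "m = \<phi> (xmon (\<sigma> \<gamma>))" using mons(2) nz f(2) by blast
    then have "\<gamma> \<le> val f" using lead(2) by blast
    then consider "\<gamma> = val f" | "\<sigma> \<gamma> < \<sigma> (val f)"
      using \<sigma>(1) strict_mono_less by fastforce
    then show ?thesis
    proof cases
      case 2
      then have "ser_less (xmon (\<sigma> \<gamma>)) (xmon (\<sigma> (val f)))" by (rule xmon_less)
      then show ?thesis using mono xmon_in_hahn_grp \<gamma>(2) by (blast intro: less_imp_le)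
    qed (simp add: \<gamma>(2))
  qed
  moreover have "ls 0 g (\<phi> (xmon (\<sigma> (val f)))) \<noteq> 0" using mons(1) lead(1) f(2) by simp
  ultimately show "has_leading (ls 0 g)" unfolding has_leading_def by blast
qed

text \<open>The leading monomial h of l'(g) satisfies l'(h) < l'(g),
  since l(h) has only monomials below h; as l' is an order embedding, h < g.\<close>
lemma exp_ext_dominated:
  fixes l :: "'h::linorder \<Rightarrow> 'h \<Rightarrow> 'k::linordered_field"
  assumes E: "exp_ext mul one H l H' l'"
    and unit: "one \<in> H" "l one = (\<lambda>_. 0)"
    and dom: "log_dominated one H l"
  shows "log_dominated one H' l'"
  unfolding log_dominated_def
proof (intro ballI impI)
  have sub: "H \<subseteq> H'"
    and lmon: "\<forall>a\<in>H'. \<forall>b\<in>H'. a < b \<longrightarrow> ser_less (l' a) (l' b)"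
    and lext: "\<forall>a\<in>H. l' a = l a"
    and limg: "l' ` H' = series_on {h\<in>H. one < h}"
    using E unfolding exp_ext_def by auto
  fix g assume g: "g \<in> H'" "one < g"
  define \<alpha> where "\<alpha> = l' g"
  have "\<alpha> \<in> series_on {h\<in>H. one < h}" unfolding \<alpha>_def using limg g(1) by blast
  then have aw: "anti_wo (supp \<alpha>)" and asub: "supp \<alpha> \<subseteq> {h\<in>H. one < h}"
    unfolding series_on_def by auto
  have "ser_less (l' one) \<alpha>" unfolding \<alpha>_def using lmon sub unit(1) g by blast
  then have apos: "ser_pos \<alpha>" using lext unit unfolding ser_less_def by simp
  then have "supp \<alpha> \<noteq> {}" unfolding ser_pos_def by simp
  note lead = leading_val[OF aw this]
  define h where "h = val \<alpha>"
  have "h \<in> supp \<alpha>" using lead(1) unfolding h_def supp_def by simp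
  then have hH: "h \<in> H" "one < h" using asub by auto
  have lh_below: "\<forall>m. l h m \<noteq> 0 \<longrightarrow> m < h" using dom hH unfolding log_dominated_def by blast
  have "l h h = 0" using lh_below by blast
  then have "(\<lambda>m. \<alpha> m - l h m) h > 0" using apos unfolding h_def ser_pos_def by simp
  moreover have "m \<le> h" if "(\<lambda>m. \<alpha> m - l h m) m \<noteq> 0" for m
  proof -
    have "\<alpha> m \<noteq> 0 \<or> l h m \<noteq> 0" using that by auto
    then show ?thesis using lead(2) lh_below unfolding h_def by (auto intro: less_imp_le)
  qed
  ultimately have "ser_pos (\<lambda>m. \<alpha> m - l h m)" by (intro ser_posI) blast+
  then have hg_log: "ser_less (l' h) (l' g)" using lext hH(1) unfolding ser_less_def \<alpha>_def by simp
  have "h < g"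
  proof (rule ccontr)
    assume "\<not> h < g"
    then consider "g = h" | "g < h" by fastforce
    then show False
    proof cases
      case 1 then show False using hg_log ser_less_irrefl by metis
    next
      case 2
      then have "ser_less (l' g) (l' h)" using lmon g(1) sub hH(1) by blast
      then show False using hg_log ser_less_asym by blast
    qed
  qed
  then have "\<forall>m. \<alpha> m \<noteq> 0 \<longrightarrow> m < g" using lead(2) unfolding h_def by (meson le_less_trans)
  moreover have "has_leading \<alpha>" using lead unfolding has_leading_def by blast
  ultimately show "has_leading (l' g) \<and> (\<forall>m. l' g m \<noteq> 0 \<longrightarrow> m < g)"
    unfolding \<alpha>_def by blast
qed

lemma tower_dominated:
  fixes \<phi> :: "('g::linorder \<Rightarrow> 'k::linordered_field) \<Rightarrow> 'h::linorder"
  assumes T: "EL_tower \<sigma> \<phi> mul HS ls N" and \<sigma>: "strict_mono \<sigma>" "\<forall>\<gamma>. \<sigma> \<gamma> < \<gamma>"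
    and "k \<le> N"
  shows "\<phi> (\<lambda>_. 0) \<in> HS k \<and> ls k (\<phi> (\<lambda>_. 0)) = (\<lambda>_. 0) \<and> log_dominated (\<phi> (\<lambda>_. 0)) (HS k) (ls k)"
  using \<open>k \<le> N\<close>
proof (induction k)
  case 0
  have "\<phi> (\<lambda>_. 0) \<in> HS 0" using EL_tower_image[OF T] zero_in_hahn_grp by blast
  moreover have "ls 0 (\<phi> (\<lambda>_. 0)) h = 0" for h
    using EL_tower_log0[OF T zero_in_hahn_grp] by (simp add: l_sigma_zero)
  ultimately show ?case using tower_base_dominated[OF T \<sigma>] by simp
next
  case (Suc k)
  then have IH: "\<phi> (\<lambda>_. 0) \<in> HS k" "ls k (\<phi> (\<lambda>_. 0)) = (\<lambda>_. 0)"
    "log_dominated (\<phi> (\<lambda>_. 0)) (HS k) (ls k)" by simp_all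
  have E: "exp_ext mul (\<phi> (\<lambda>_. 0)) (HS k) (ls k) (HS (Suc k)) (ls (Suc k))"
    using EL_tower_ext[OF T] Suc.prems by simp
  then have "HS k \<subseteq> HS (Suc k)" "\<forall>a\<in>HS k. ls (Suc k) a = ls k a"
    unfolding exp_ext_def by simp_all
  then have "\<phi> (\<lambda>_. 0) \<in> HS (Suc k)" "ls (Suc k) (\<phi> (\<lambda>_. 0)) = (\<lambda>_. 0)"
    using IH(1,2) by auto
  with exp_ext_dominated[OF E IH] show ?case by blast
qed

theorem mainTheorem13:
  fixes \<sigma> :: "'g::linorder \<Rightarrow> 'g"
    and lg :: "'k::linordered_field \<Rightarrow> 'k"
    and \<phi> :: "('g \<Rightarrow> 'k) \<Rightarrow> 'h::linorder"
    and mul :: "'h \<Rightarrow> 'h \<Rightarrow> 'h"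
    and HS :: "nat \<Rightarrow> 'h set"
    and ls :: "nat \<Rightarrow> 'h \<Rightarrow> 'h \<Rightarrow> 'k"
    and n :: nat
  assumes "strict_mono \<sigma>"
    and "\<forall>\<gamma>. \<sigma> \<gamma> < \<gamma>"
    and "is_log lg"
    and "surj_log lg"
    and "EL_tower \<sigma> \<phi> mul HS ls n"
  shows "\<forall>g\<in>HS n. \<phi> (\<lambda>_. 0) < g \<longrightarrow> val (ls n g) < g"
proof -
  have "log_dominated (\<phi> (\<lambda>_. 0)) (HS n) (ls n)"
    using tower_dominated[OF assms(5,1,2) order_refl] by blast
  then show ?thesis unfolding log_dominated_def using val_less_bound by blast
qed

end
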